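(* Let $n\ge 1$, $L\ge 1$ and $0\le s<n$ be integers, and consider the $(n,L)$-regular tree $T$. Let $\mathcal{D}$ be a finite data set with $|\mathcal{D}|=d\ge 1$, and let $r\in[0,1]$. Suppose a data placement assigns to each worker node $v$ a set $\mathcal{D}(v)\subseteq\mathcal{D}$ with $|\mathcal{D}(v)|\le r d$ for every worker $v$, and suppose the placement is robust to any $s$ stragglers per parent (as defined in the context). Then $$ r \;\ge\; r_{\mathsf{CR}} \;:=\; \frac{1}{\left(\frac{n}{s+1}\right)+\left(\frac{n}{s+1}\right)^2+\cdots+\left(\frac{n}{s+1}\right)^L}. $$
   Context: An $(n,L)$-regular tree consists of a root node (the master, layer $0$) and $L$ layers of worker nodes: each node in layers $0,1,\dots,L-1$ has exactly $n$ children in the next layer, and the nodes of layer $L$ are leaves; thus there are $N=n+n^2+\cdots+n^L$ worker nodes. A straggling pattern is a choice, for every node $u$ in layers $0,\dots,L-1$, of a set of at most $s$ of the children of $u$, declared straggling. Under a straggling pattern, a worker node $v$ is called surviving if neither $v$ nor any of its ancestors in layers $1,\dots,L$ (i.e. the nodes on the path from $v$ to the master, excluding the master) is straggling. The placement $\{\mathcal{D}(v)\}$ is robust to any $s$ stragglers per parent if for every straggling pattern and every data point $x\in\mathcal{D}$ there is a surviving worker $v$ with $x\in\mathcal{D}(v)$ (this is the necessary condition for the master to recover the full gradient $\sum_{x\in\mathcal{D}}\nabla\ell(\theta;x)$, since the contribution of $x$ can only be computed at nodes storing $x$ and propagated to the master along the tree). The number $r$ bounding the fraction of the data set stored at each worker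 is the computation load. *)

theory Defs
  imports Complex_Main
begin

text \<open>Nodes of the (n,L)-regular tree are encoded as lists of child indices
  (each < n) describing the path from the master; the master is [], a node in
  layer k is a list of length k. Child i of node u is u @ [i].\<close>

definition tree_node :: "nat \<Rightarrow> nat \<Rightarrow> nat list \<Rightarrow> bool" where
  "tree_node n L v \<longleftrightarrow> length v \<le> L \<and> (\<forall>i\<in>set v. i < n)"

definition worker :: "nat \<Rightarrow> nat \<Rightarrow> nat list \<Rightarrow> bool" where
  "worker n L v \<longleftrightarrow> tree_node n L v \<and> 1 \<le> length v"

text \<open>A straggling pattern assigns to every node u in layers 0..L-1 a set S u of
  at most s children indices (child u @ [i] straggles iff i \<in> S u).\<close>

definition straggling_pattern :: "nat \<Rightarrow> nat \<Rightarrow> nat \<Rightarrow> (nat list \<Rightarrow> nat set) \<Rightarrow> bool" where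
  "straggling_pattern n L s S \<longleftrightarrow>
     (\<forall>u. tree_node n L u \<and> length u < L \<longrightarrow> S u \<subseteq> {..<n} \<and> card (S u) \<le> s)"

text \<open>v survives iff none of the nodes on the path from v to the master
  (excluding the master), i.e. take (k+1) v for k < length v, is straggling.\<close>

definition surviving :: "(nat list \<Rightarrow> nat set) \<Rightarrow> nat list \<Rightarrow> bool" where
  "surviving S v \<longleftrightarrow> (\<forall>k<length v. v ! k \<notin> S (take k v))"

definition robust_placement ::
  "nat \<Rightarrow> nat \<Rightarrow> nat \<Rightarrow> 'a set \<Rightarrow> (nat list \<Rightarrow> 'a set) \<Rightarrow> bool" where
  "robust_placement n L s Ds D \<longleftrightarrow>
     (\<forall>S. straggling_pattern n L s S \<longrightarrow>
        (\<forall>x\<in>Ds. \<exists>v. worker n L v \<and> surviving S v \<and> x \<in> D v))"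

end

theory Submission
  imports Defs
begin

text \<open>Give every worker in layer \<open>k\<close> the weight \<open>q^k\<close> with \<open>q = 1/(s+1)\<close>. For a fixed data
  point \<open>x\<close>, induction from the leaves upwards shows: either the adversary can choose stragglers
  below a node \<open>u\<close> cutting off every copy of \<open>x\<close> stored below \<open>u\<close>, or the total weight (relative
  to \<open>u\<close>) of the workers below \<open>u\<close> storing \<open>x\<close> is at least 1. Indeed, if fewer than \<open>s + 1\<close>
  children of \<open>u\<close> store \<open>x\<close> or have weight at least 1 below them, the adversary lets exactly those
  children straggle and cuts off \<open>x\<close> below all others. Robustness rules out the first alternative
  at the master, so summing over the data set gives
  \<open>d \<le> \<Sum>\<^sub>v q^|v| |D(v)| \<le> r d \<Sum>\<^sub>k (n q)^k\<close>.\<close>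

fun weighted_subtree_sum :: "nat \<Rightarrow> real \<Rightarrow> (nat list \<Rightarrow> real) \<Rightarrow> nat list \<Rightarrow> nat \<Rightarrow> real" where
  "weighted_subtree_sum n q g u 0 = 0"
| "weighted_subtree_sum n q g u (Suc m) =
     (\<Sum>i<n. q * (g (u @ [i]) + weighted_subtree_sum n q g (u @ [i]) m))"

lemma weighted_subtree_sum_nonneg:
  assumes "q \<ge> 0" and "\<And>v. g v \<ge> 0"
  shows "weighted_subtree_sum n q g u m \<ge> 0"
  using assms by (induction m arbitrary: u) (auto intro!: sum_nonneg)

lemma weighted_subtree_sum_sum:
  assumes "finite A"
  shows "weighted_subtree_sum n q (\<lambda>v. \<Sum>x\<in>A. f x v) u m = (\<Sum>x\<in>A. weighted_subtree_sum n q (f x) u m)"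
proof (induction m arbitrary: u)
  case 0
  then show ?case by simp
next
  case (Suc m)
  then show ?case
    by (simp add: sum_distrib_left sum.distrib distrib_left sum.swap[where A = "{..<n}"])
qed

lemma weighted_subtree_sum_mono:
  assumes "q \<ge> 0" and "\<And>v. worker n L v \<Longrightarrow> g v \<le> h v"
    and "\<forall>i\<in>set u. i < n" and "length u + m \<le> L"
  shows "weighted_subtree_sum n q g u m \<le> weighted_subtree_sum n q h u m"
  using assms(3,4)
proof (induction m arbitrary: u)
  case 0
  then show ?case by simp
next
  case (Suc m)
  show ?case
  proof (simp only: weighted_subtree_sum.simps, rule sum_mono)
    fix i assume "i \<in> {..<n}"
    with Suc.prems have "worker n L (u @ [i])"
      and "weighted_subtree_sum n q g (u @ [i]) m \<le> weighted_subtree_sum n q h (u @ [i]) m"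
      by (auto simp: worker_def tree_node_def intro!: Suc.IH)
    with assms(1,2) show "q * (g (u @ [i]) + weighted_subtree_sum n q g (u @ [i]) m)
        \<le> q * (h (u @ [i]) + weighted_subtree_sum n q h (u @ [i]) m)"
      by (intro mult_left_mono add_mono) auto
  qed
qed

lemma sum_powers_Suc_atMost:
  "(\<Sum>k=1..Suc m. a ^ k) = a * (1 + (\<Sum>k=1..m. (a :: real) ^ k))"
proof -
  have "(\<Sum>k=1..Suc m. a ^ k) = (\<Sum>k=0..m. a ^ Suc k)"
    using sum.shift_bounds_cl_Suc_ivl[of "(^) a" 0 m] by simp
  also have "\<dots> = a * (\<Sum>k=0..m. a ^ k)"
    by (simp add: sum_distrib_left)
  also have "\<dots> = a * (1 + (\<Sum>k=1..m. a ^ k))"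
    by (simp add: sum.atLeast_Suc_atMost)
  finally show ?thesis .
qed

lemma weighted_subtree_sum_const:
  "weighted_subtree_sum n q (\<lambda>_. c) u m = c * (\<Sum>k=1..m. (real n * q) ^ k)"
proof (induction m arbitrary: u)
  case 0
  then show ?case by simp
next
  case (Suc m)
  then have "weighted_subtree_sum n q (\<lambda>_. c) u (Suc m)
      = real n * q * (c + c * (\<Sum>k=1..m. (real n * q) ^ k))"
    by simp
  also have "\<dots> = c * (\<Sum>k=1..Suc m. (real n * q) ^ k)"
    unfolding sum_powers_Suc_atMost by (simp add: algebra_simps)
  finally show ?case .
qed

definition surviving_from :: "(nat list \<Rightarrow> nat set) \<Rightarrow> nat list \<Rightarrow> nat list \<Rightarrow> bool" where
  "surviving_from S u w \<longleftrightarrow> (\<forall>k<length w. w ! k \<notin> S (u @ take k w))"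

lemma surviving_iff_surviving_from_root: "surviving S v \<longleftrightarrow> surviving_from S [] v"
  by (simp add: surviving_def surviving_from_def)

definition hides :: "nat \<Rightarrow> nat \<Rightarrow> (nat list \<Rightarrow> nat set) \<Rightarrow> nat list set \<Rightarrow> nat list \<Rightarrow> bool" where
  "hides n L S A u \<longleftrightarrow>
     (\<forall>w. w \<noteq> [] \<and> worker n L (u @ w) \<and> u @ w \<in> A \<longrightarrow> \<not> surviving_from S u w)"

definition graft_patterns ::
  "nat list \<Rightarrow> nat set \<Rightarrow> (nat \<Rightarrow> nat list \<Rightarrow> nat set) \<Rightarrow> nat list \<Rightarrow> nat set" where
  "graft_patterns u C SS w =
     (if w = u then C
      else if take (length u) w = u \<and> length u < length w then SS (w ! length u) w
      else {})"

lemma straggling_pattern_graft_patterns: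
  assumes "C \<subseteq> {..<n}" and "card C \<le> s"
    and "\<And>i. i < n \<Longrightarrow> straggling_pattern n L s (SS i)"
  shows "straggling_pattern n L s (graft_patterns u C SS)"
  unfolding straggling_pattern_def
proof (intro allI impI)
  fix w assume w: "tree_node n L w \<and> length w < L"
  show "graft_patterns u C SS w \<subseteq> {..<n} \<and> card (graft_patterns u C SS w) \<le> s"
  proof (cases "w \<noteq> u \<and> take (length u) w = u \<and> length u < length w")
    case True
    with w have "w ! length u < n" by (auto simp: tree_node_def)
    with assms(3) w True show ?thesis by (auto simp: graft_patterns_def straggling_pattern_def)
  next
    case False
    with assms(1,2) show ?thesis by (auto simp: graft_patterns_def)
  qed
qed

text \<open>Letting the children in \<open>C\<close> straggle cuts off everything below them; below every other
  child the grafted patterns take over.\<close>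

lemma hides_graft_patterns:
  assumes "\<And>i. i < n \<Longrightarrow> i \<notin> C \<Longrightarrow> u @ [i] \<notin> A \<and> hides n L (SS i) A (u @ [i])"
  shows "hides n L (graft_patterns u C SS) A u"
  unfolding hides_def
proof (intro allI impI notI)
  fix w
  assume w: "w \<noteq> [] \<and> worker n L (u @ w) \<and> u @ w \<in> A"
    and surv: "surviving_from (graft_patterns u C SS) u w"
  then obtain i w' where w_eq: "w = i # w'" by (cases w) auto
  from w have "i < n" by (auto simp: w_eq worker_def tree_node_def)
  moreover from surv have "i \<notin> C"
    by (auto simp: surviving_from_def graft_patterns_def w_eq)
  ultimately have "u @ [i] \<notin> A" and hidden: "hides n L (SS i) A (u @ [i])"
    using assms by auto
  with w have "w' \<noteq> []" by (auto simp: w_eq)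
  moreover have "surviving_from (SS i) (u @ [i]) w'"
    unfolding surviving_from_def
  proof (intro allI impI)
    fix k assume "k < length w'"
    with surv have "w ! Suc k \<notin> graft_patterns u C SS (u @ take (Suc k) w)"
      by (auto simp: surviving_from_def w_eq)
    then show "w' ! k \<notin> SS i ((u @ [i]) @ take k w')"
      by (simp add: graft_patterns_def w_eq)
  qed
  ultimately show False
    using hidden w by (auto simp: hides_def w_eq)
qed

lemma weighted_subtree_sum_ge_1_if_many_children:
  assumes "q \<ge> 0" and "\<And>v. g v \<ge> 0"
    and "C \<subseteq> {..<n}" and "1 \<le> q * real (card C)"
    and "\<And>i. i \<in> C \<Longrightarrow> 1 \<le> g (u @ [i]) + weighted_subtree_sum n q g (u @ [i]) m"
  shows "1 \<le> weighted_subtree_sum n q g u (Suc m)"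
proof -
  have "1 \<le> (\<Sum>i\<in>C. q)"
    using assms(4) by (simp add: mult.commute)
  also have "\<dots> \<le> (\<Sum>i\<in>C. q * (g (u @ [i]) + weighted_subtree_sum n q g (u @ [i]) m))"
    using assms(1,5) by (intro sum_mono) (metis mult.right_neutral mult_left_mono)
  also have "\<dots> \<le> (\<Sum>i<n. q * (g (u @ [i]) + weighted_subtree_sum n q g (u @ [i]) m))"
    using assms(1-3)
    by (intro sum_mono2) (auto intro!: mult_nonneg_nonneg add_nonneg_nonneg weighted_subtree_sum_nonneg)
  finally show ?thesis by simp
qed

lemma hides_or_weighted_subtree_sum_ge_1:
  assumes "\<forall>i\<in>set u. i < n" and "length u + m = L"
  shows "(\<exists>S. straggling_pattern n L s S \<and> hides n L S A u)
    \<or> 1 \<le> weighted_subtree_sum n (1 / real (s + 1)) (\<lambda>v. of_bool (v \<in> A)) u m"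
  using assms
proof (induction m arbitrary: u)
  case 0
  then have "hides n L (\<lambda>_. {}) A u"
    by (auto simp: hides_def worker_def tree_node_def)
  moreover have "straggling_pattern n L s (\<lambda>_. {})"
    by (simp add: straggling_pattern_def)
  ultimately show ?case by blast
next
  case (Suc m)
  define q where "q = 1 / real (s + 1)"
  define g where "g = (\<lambda>v. of_bool (v \<in> A) :: real)"
  define C where "C = {i. i < n \<and> (u @ [i] \<in> A \<or> 1 \<le> weighted_subtree_sum n q g (u @ [i]) m)}"
  have q_nonneg: "q \<ge> 0" and g_nonneg: "\<And>v. g v \<ge> 0"
    by (simp_all add: q_def g_def)
  have C_sub: "C \<subseteq> {..<n}" by (auto simp: C_def)
  show ?case
  proof (cases "s + 1 \<le> card C")
    case True
    then have "1 \<le> q * real (card C)"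
      by (simp add: q_def field_simps)
    moreover have "1 \<le> g (u @ [i]) + weighted_subtree_sum n q g (u @ [i]) m" if "i \<in> C" for i
      using that weighted_subtree_sum_nonneg[OF q_nonneg g_nonneg, where n = n and u = "u @ [i]" and m = m]
      by (auto simp: C_def g_def)
    ultimately have "1 \<le> weighted_subtree_sum n q g u (Suc m)"
      by (rule weighted_subtree_sum_ge_1_if_many_children[OF q_nonneg g_nonneg C_sub])
    then show ?thesis
      unfolding q_def g_def by blast
  next
    case False
    have "\<exists>S. straggling_pattern n L s S \<and> (i < n \<and> i \<notin> C \<longrightarrow> hides n L S A (u @ [i]))" for i
    proof (cases "i < n \<and> i \<notin> C")
      case True
      with Suc.prems Suc.IH[of "u @ [i]"] show ?thesis
        by (auto simp: C_def q_def g_def)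
    next
      case False
      then show ?thesis by (auto simp: straggling_pattern_def)
    qed
    then obtain SS where SS: "\<And>i. straggling_pattern n L s (SS i)"
      "\<And>i. i < n \<Longrightarrow> i \<notin> C \<Longrightarrow> hides n L (SS i) A (u @ [i])"
      by metis
    from False have "card C \<le> s" by simp
    with C_sub SS(1) have "straggling_pattern n L s (graft_patterns u C SS)"
      by (intro straggling_pattern_graft_patterns)
    moreover have "hides n L (graft_patterns u C SS) A u"
      using SS(2) by (intro hides_graft_patterns) (simp add: C_def)
    ultimately show ?thesis by blast
  qed
qed

lemma robust_placement_weighted_copies_ge_1:
  assumes "robust_placement n L s Ds D" and "x \<in> Ds"
  shows "1 \<le> weighted_subtree_sum n (1 / real (s + 1)) (\<lambda>v. of_bool (x \<in> D v)) [] L"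
proof -
  have "\<not> hides n L S {v. x \<in> D v} []" if "straggling_pattern n L s S" for S
  proof -
    from assms that obtain v where "worker n L v" "surviving S v" "x \<in> D v"
      unfolding robust_placement_def by blast
    then have "v \<noteq> [] \<and> worker n L ([] @ v) \<and> [] @ v \<in> {v. x \<in> D v} \<and> surviving_from S [] v"
      by (auto simp: worker_def surviving_iff_surviving_from_root)
    then show ?thesis
      unfolding hides_def by blast
  qed
  then show ?thesis
    using hides_or_weighted_subtree_sum_ge_1[of "[]" n L L s "{v. x \<in> D v}"] by auto
qed

lemma robust_placement_card_le_weighted_load:
  assumes "robust_placement n L s Ds D" and "finite Ds"
  shows "real (card Ds) \<le> weighted_subtree_sum n (1 / real (s + 1)) (\<lambda>v. real (card (D v \<inter> Ds))) [] L"
proof -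
  have "real (card Ds) \<le> (\<Sum>x\<in>Ds. weighted_subtree_sum n (1 / real (s + 1)) (\<lambda>v. of_bool (x \<in> D v)) [] L)"
    using sum_mono[OF robust_placement_weighted_copies_ge_1[OF assms(1)]] by simp
  also have "\<dots> = weighted_subtree_sum n (1 / real (s + 1)) (\<lambda>v. \<Sum>x\<in>Ds. of_bool (x \<in> D v)) [] L"
    by (rule weighted_subtree_sum_sum[OF assms(2), symmetric])
  also have "(\<lambda>v. \<Sum>x\<in>Ds. of_bool (x \<in> D v) :: real) = (\<lambda>v. real (card (D v \<inter> Ds)))"
    using assms(2) by (simp add: sum_of_bool_eq Int_commute)
  finally show ?thesis .
qed

theorem theorem1:
  fixes n L s :: nat and Ds :: "'a set" and D :: "nat list \<Rightarrow> 'a set" and r :: real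
  assumes "n \<ge> 1" and "L \<ge> 1" and "s < n"
    and "finite Ds" and "card Ds \<ge> 1"
    and "0 \<le> r" and "r \<le> 1"
    and "\<And>v. worker n L v \<Longrightarrow> D v \<subseteq> Ds"
    and "\<And>v. worker n L v \<Longrightarrow> real (card (D v)) \<le> r * real (card Ds)"
    and "robust_placement n L s Ds D"
  shows "r \<ge> 1 / (\<Sum>k=1..L. (real n / real (s + 1)) ^ k)"
proof -
  define q where "q = 1 / real (s + 1)"
  define T where "T = (\<Sum>k=1..L. (real n / real (s + 1)) ^ k)"
  have "real (card Ds) \<le> weighted_subtree_sum n q (\<lambda>v. real (card (D v \<inter> Ds))) [] L"
    unfolding q_def by (rule robust_placement_card_le_weighted_load[OF assms(10,4)])
  also have "\<dots> \<le> weighted_subtree_sum n q (\<lambda>_. r * real (card Ds)) [] L"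
    using assms(8,9) by (intro weighted_subtree_sum_mono) (auto simp: q_def Int_absorb2)
  also have "\<dots> = real (card Ds) * (r * T)"
    by (simp add: weighted_subtree_sum_const q_def T_def)
  finally have "1 \<le> r * T"
    using assms(5) by simp
  moreover have "T > 0"
    using assms(1,2) unfolding T_def by (intro sum_pos) auto
  ultimately show ?thesis
    unfolding T_def[symmetric] by (simp add: divide_le_eq mult.commute)
qed

end
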